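(* Satisfaction approval voting (SAV) is the only BSWAV rule (for the fixed $m$ and $k$) that satisfies party-proportionality and aversion to unanimous committees.
   Context: Let $\mathcal C=\{c_1,\dots,c_m\}$ ($m\ge2$) be the candidates, $\mathcal A$ the set of non-empty subsets of $\mathcal C$ (ballots), and a profile a map $A:N_A\to\mathcal A$ from a non-empty finite set of voters $N_A\subseteq\mathbb N$. Fix $k\in\{1,\dots,m-1\}$, and let $\mathcal W_k$ be the set of $k$-element subsets of $\mathcal C$ (committees). An ABC voting rule maps each profile to a non-empty subset of $\mathcal W_k$. A BSWAV rule is defined by a weight vector $\alpha\in\mathbb R^m_{\ge0}$ and chooses for each profile $A$ the committees $W$ maximizing $\sum_{i\in N_A}\alpha_{|A_i|}|A_i\cap W|$. SAV is the BSWAV rule with $\alpha_x=1/x$ for $x\in\{1,\dots,m\}$. A profile $A$ is a party-list profile if there is a partition $\mathcal P_A=\{P_1,\dots,P_\ell\}$ of $\mathcal C$ such that every voter's ballot equals some $P_j$; $n_j$ denotes the number of voters whose ballot is $P_j$. An ABC voting rule $f$ is party-proportional if for all party-list profiles $A$, all $W\in f(A)$, and all parties $P_i,P_j\in\mathcal P_A$ with $n_i/|P_i|<n_j/|P_j|$, $P_i\subseteq W$ implies $P_j\subseteq W$. $f$ satisfies aversion to unanimous committees if for all party-list profiles $A$ and parties $P_i\in\mathcal P_A$: if $W\subseteq P_i$ for all $W\in f(A)$, then $n_i/|P_i|>n_j$ for every other party $P_j\in\mathcal P_A$ with $|P_j|=1$. *)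

theory Defs
  imports Complex_Main "HOL-Library.Disjoint_Sets" "HOL-Library.Cardinality"
begin

text \<open>Candidates are the elements of a finite type 'c (so m = CARD('c)).  Values of A outside N
  are irrelevant.\<close>

definition valid_profile :: "nat set \<Rightarrow> (nat \<Rightarrow> 'c set) \<Rightarrow> bool" where
  "valid_profile N A \<longleftrightarrow> finite N \<and> N \<noteq> {} \<and> (\<forall>i\<in>N. A i \<noteq> {})"

definition bswav_score :: "(nat \<Rightarrow> real) \<Rightarrow> nat set \<Rightarrow> (nat \<Rightarrow> 'c set) \<Rightarrow> 'c set \<Rightarrow> real" where
  "bswav_score \<alpha> N A W = (\<Sum>i\<in>N. \<alpha> (card (A i)) * real (card (A i \<inter> W)))"

definition bswav :: "nat \<Rightarrow> (nat \<Rightarrow> real) \<Rightarrow> nat set \<Rightarrow> (nat \<Rightarrow> 'c::finite set) \<Rightarrow> 'c set set" where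
  "bswav k \<alpha> N A = {W. card W = k \<and>
      (\<forall>W'. card W' = k \<longrightarrow> bswav_score \<alpha> N A W' \<le> bswav_score \<alpha> N A W)}"

definition sav :: "nat \<Rightarrow> nat set \<Rightarrow> (nat \<Rightarrow> 'c::finite set) \<Rightarrow> 'c set set" where
  "sav k = bswav k (\<lambda>x. 1 / real x)"

definition party_list :: "nat set \<Rightarrow> (nat \<Rightarrow> 'c set) \<Rightarrow> 'c set set \<Rightarrow> bool" where
  "party_list N A P \<longleftrightarrow> valid_profile N A \<and> partition_on UNIV P \<and> (\<forall>i\<in>N. A i \<in> P)"

definition n_votes :: "nat set \<Rightarrow> (nat \<Rightarrow> 'c set) \<Rightarrow> 'c set \<Rightarrow> nat" where
  "n_votes N A Q = card {i\<in>N. A i = Q}"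

definition party_proportional :: "(nat set \<Rightarrow> (nat \<Rightarrow> 'c set) \<Rightarrow> 'c set set) \<Rightarrow> bool" where
  "party_proportional f \<longleftrightarrow> (\<forall>N A P. party_list N A P \<longrightarrow>
     (\<forall>W\<in>f N A. \<forall>Pi\<in>P. \<forall>Pj\<in>P.
        real (n_votes N A Pi) / real (card Pi) < real (n_votes N A Pj) / real (card Pj) \<longrightarrow>
        Pi \<subseteq> W \<longrightarrow> Pj \<subseteq> W))"

definition averse_unanimous :: "(nat set \<Rightarrow> (nat \<Rightarrow> 'c set) \<Rightarrow> 'c set set) \<Rightarrow> bool" where
  "averse_unanimous f \<longleftrightarrow> (\<forall>N A P. party_list N A P \<longrightarrow>
     (\<forall>Pi\<in>P. (\<forall>W\<in>f N A. W \<subseteq> Pi) \<longrightarrow>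
        (\<forall>Pj\<in>P. Pj \<noteq> Pi \<and> card Pj = 1 \<longrightarrow>
           real (n_votes N A Pi) / real (card Pi) > real (n_votes N A Pj))))"

end

theory Submission
  imports Defs "HOL-Library.Countable"
begin

text \<open>A BSWAV score is the sum over the committee of per-candidate approval weights, so
  optimal committees are characterised by pairwise exchanges. Party-proportionality forces
  \<open>\<alpha> 1 > 0\<close>. If \<open>x * \<alpha> x \<noteq> \<alpha> 1\<close> for some \<open>x < m\<close>, take a party \<open>P\<close> of size \<open>x\<close>
  with \<open>x n \<mp> 1\<close> voters next to singleton parties with \<open>n\<close> voters each: for large \<open>n\<close> the
  weights rank \<open>P\<close> against the singletons opposite to the vote ratios, and the exchange
  argument then violates party-proportionality or aversion to unanimous committees. When
  \<open>x * \<alpha> x = \<alpha> 1\<close> for all \<open>x < m\<close>, the score is a positive multiple of the SAV score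
  plus a term that does not depend on the committee, since a voter approving every
  candidate approves exactly \<open>k\<close> committee members. Conversely, SAV gives every member of a
  party the weight \<open>n\<^sub>j / |P\<^sub>j|\<close>, from which both axioms follow by exchange.\<close>

definition approval_weight :: "(nat \<Rightarrow> real) \<Rightarrow> nat set \<Rightarrow> (nat \<Rightarrow> 'c set) \<Rightarrow> 'c \<Rightarrow> real" where
  "approval_weight \<alpha> N A c = (\<Sum>i\<in>{i\<in>N. c \<in> A i}. \<alpha> (card (A i)))"

lemma bswav_score_eq_sum_approval_weight:
  fixes A :: "nat \<Rightarrow> 'c::finite set"
  assumes "finite N"
  shows "bswav_score \<alpha> N A W = (\<Sum>c\<in>W. approval_weight \<alpha> N A c)"
proof -
  have "bswav_score \<alpha> N A W = (\<Sum>i\<in>N. \<Sum>c\<in>W. if c \<in> A i then \<alpha> (card (A i)) else 0)"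
    unfolding bswav_score_def
    by (intro sum.cong refl) (simp add: sum.If_cases Int_commute)
  also have "\<dots> = (\<Sum>c\<in>W. \<Sum>i\<in>N. if c \<in> A i then \<alpha> (card (A i)) else 0)"
    by (rule sum.swap)
  also have "\<dots> = (\<Sum>c\<in>W. approval_weight \<alpha> N A c)"
    unfolding approval_weight_def using assms by (simp add: sum.If_cases Int_def conj_commute)
  finally show ?thesis .
qed

lemma bswav_score_exchange:
  fixes A :: "nat \<Rightarrow> 'c::finite set"
  assumes "finite N" "a \<notin> W" "b \<in> W"
  shows "bswav_score \<alpha> N A (insert a (W - {b}))
           = bswav_score \<alpha> N A W - approval_weight \<alpha> N A b + approval_weight \<alpha> N A a"
  using assms by (simp add: bswav_score_eq_sum_approval_weight sum.remove[of W b])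

lemma card_exchange:
  fixes W :: "'c::finite set"
  assumes "a \<notin> W" "b \<in> W"
  shows "card (insert a (W - {b})) = card W"
  using assms by (metis card_Suc_Diff1 card_insert_disjoint finite Diff_iff)

lemma bswav_exchange_le:
  fixes A :: "nat \<Rightarrow> 'c::finite set"
  assumes "finite N" "W \<in> bswav k \<alpha> N A" "a \<notin> W" "b \<in> W"
  shows "approval_weight \<alpha> N A a \<le> approval_weight \<alpha> N A b"
proof -
  have "card (insert a (W - {b})) = k"
    using assms(2-4) card_exchange unfolding bswav_def by fastforce
  then have "bswav_score \<alpha> N A (insert a (W - {b})) \<le> bswav_score \<alpha> N A W"
    using assms(2) unfolding bswav_def by blast
  then show ?thesis using bswav_score_exchange[OF assms(1,3,4)] by simp
qed

lemma bswav_exchange_mem: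
  fixes A :: "nat \<Rightarrow> 'c::finite set"
  assumes "finite N" "W \<in> bswav k \<alpha> N A" "a \<notin> W" "b \<in> W"
    and "approval_weight \<alpha> N A b \<le> approval_weight \<alpha> N A a"
  shows "insert a (W - {b}) \<in> bswav k \<alpha> N A"
proof -
  have "card (insert a (W - {b})) = k"
    using assms(2-4) card_exchange unfolding bswav_def by fastforce
  moreover have "bswav_score \<alpha> N A W \<le> bswav_score \<alpha> N A (insert a (W - {b}))"
    using bswav_score_exchange[OF assms(1,3,4)] assms(5) by simp
  ultimately show ?thesis using assms(2) unfolding bswav_def by fastforce
qed

lemma bswav_dominant_subset_or_superset:
  fixes A :: "nat \<Rightarrow> 'c::finite set"
  assumes "finite N" "W \<in> bswav k \<alpha> N A"
    and "\<And>a b. a \<in> Q \<Longrightarrow> b \<notin> Q \<Longrightarrow> approval_weight \<alpha> N A b < approval_weight \<alpha> N A a"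
  shows "Q \<subseteq> W \<or> W \<subseteq> Q"
  using bswav_exchange_le[OF assms(1,2)] assms(3) by (meson leD subsetI)

lemma bswav_nonempty:
  assumes "k \<le> CARD('c::finite)"
  shows "bswav k \<alpha> N (A :: nat \<Rightarrow> 'c set) \<noteq> {}"
proof -
  let ?S = "{W :: 'c set. card W = k}"
  let ?score = "bswav_score \<alpha> N A"
  have "?S \<noteq> {}" using obtain_subset_with_card_n[OF assms] by blast
  then obtain W where "W \<in> ?S" "?score W = Max (?score ` ?S)"
    using Max_in[of "?score ` ?S"] by fastforce
  then show ?thesis unfolding bswav_def by (auto intro: Max_ge)
qed

lemma card_bswav:
  "W \<in> bswav k \<alpha> N A \<Longrightarrow> card W = k"
  unfolding bswav_def by simp

lemma party_list_finite_voters: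
  "party_list N A P \<Longrightarrow> finite N"
  unfolding party_list_def valid_profile_def by simp

lemma approval_weight_party:
  fixes A :: "nat \<Rightarrow> 'c set"
  assumes "party_list N A P" "Q \<in> P" "c \<in> Q"
  shows "approval_weight \<alpha> N A c = real (n_votes N A Q) * \<alpha> (card Q)"
proof -
  have "disjoint P" "\<forall>i\<in>N. A i \<in> P"
    using assms(1) unfolding party_list_def partition_on_def by simp_all
  then have "{i\<in>N. c \<in> A i} = {i\<in>N. A i = Q}"
    using assms(2,3) by (blast dest: disjointD)
  then show ?thesis unfolding approval_weight_def n_votes_def by simp
qed

lemma party_list_with_votes_exists:
  fixes P :: "'c::finite set set"
  assumes "partition_on UNIV P" "Q\<^sub>0 \<in> P" "0 < n Q\<^sub>0"
  obtains N A where "party_list N A P" "\<And>Q. Q \<in> P \<Longrightarrow> n_votes N A Q = n Q"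
proof
  define N where "N = to_nat ` (SIGMA Q:P. {..<n Q})"
  define A :: "nat \<Rightarrow> 'c set" where "A = (\<lambda>i. fst (from_nat i :: 'c set \<times> nat))"
  have A_to_nat: "A (to_nat (Q, j)) = Q" for Q and j :: nat unfolding A_def by simp
  have "{} \<notin> P" using assms(1) unfolding partition_on_def by simp
  then have "\<forall>i\<in>N. A i \<in> P \<and> A i \<noteq> {}" unfolding N_def using A_to_nat by auto
  moreover have "N \<noteq> {}" using assms(2,3) unfolding N_def by blast
  ultimately show "party_list N A P"
    using assms(1) unfolding party_list_def valid_profile_def N_def by auto
  fix Q assume "Q \<in> P"
  then have "{i\<in>N. A i = Q} = to_nat ` ({Q} \<times> {..<n Q})"
    unfolding N_def using A_to_nat by force
  then show "n_votes N A Q = n Q"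
    unfolding n_votes_def by (simp add: card_image inj_on_def card_cartesian_product)
qed

definition party_with_singletons :: "'c set \<Rightarrow> 'c set set" where
  "party_with_singletons P = insert P ((\<lambda>c. {c}) ` (- P))"

lemma party_with_singletons_mem:
  "P \<in> party_with_singletons P" "c \<notin> P \<Longrightarrow> {c} \<in> party_with_singletons P"
  unfolding party_with_singletons_def by auto

lemma partition_on_party_with_singletons:
  "P \<noteq> {} \<Longrightarrow> partition_on UNIV (party_with_singletons P)"
  unfolding party_with_singletons_def partition_on_def disjoint_def by auto

lemma party_with_singletons_profile:
  fixes P :: "'c::finite set"
  assumes "P \<noteq> {}" "P \<noteq> UNIV" "0 < n\<^sub>P \<or> 0 < n"
  obtains N A where "party_list N A (party_with_singletons P)"
    "n_votes N A P = n\<^sub>P" "\<And>c. c \<notin> P \<Longrightarrow> n_votes N A {c} = n"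
    "\<And>\<alpha> c. approval_weight \<alpha> N A c
             = (if c \<in> P then real n\<^sub>P * \<alpha> (card P) else real n * \<alpha> 1)"
proof -
  let ?n = "\<lambda>Q. if Q = P then n\<^sub>P else n"
  obtain d where d: "d \<notin> P" using assms(2) by blast
  have singleton: "{c} \<in> party_with_singletons P" "{c} \<noteq> P" if "c \<notin> P" for c
    using that party_with_singletons_mem(2) by auto
  note P = party_with_singletons_mem(1)[of P]
  obtain Q\<^sub>0 where "Q\<^sub>0 \<in> party_with_singletons P" "0 < ?n Q\<^sub>0"
    using assms(3) P singleton[OF d] by (cases "0 < n\<^sub>P") auto
  then obtain N A where NA: "party_list N A (party_with_singletons P)"
    "\<And>Q. Q \<in> party_with_singletons P \<Longrightarrow> n_votes N A Q = ?n Q"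
    by (rule party_list_with_votes_exists[OF partition_on_party_with_singletons[OF assms(1)]]) blast
  have "approval_weight \<alpha> N A c = (if c \<in> P then real n\<^sub>P * \<alpha> (card P) else real n * \<alpha> 1)"
    for \<alpha> c
    using approval_weight_party[OF NA(1) P, of c] approval_weight_party[OF NA(1) singleton(1), of c c]
      NA(2)[OF P] NA(2)[OF singleton(1)] singleton(2) by (cases "c \<in> P") simp_all
  moreover have "n_votes N A {c} = n" if "c \<notin> P" for c
    using NA(2)[OF singleton(1)[OF that]] singleton(2)[OF that] by simp
  ultimately show thesis using that NA(1) NA(2)[OF P] by simp
qed

lemma party_of_card_with_singletons_profile:
  fixes x n :: nat
  assumes "1 \<le> x" "x < CARD('c)" "0 < n"
  obtains P :: "'c::finite set" and N A where "card P = x" "P \<noteq> UNIV"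
    "party_list N A (party_with_singletons P)"
    "n_votes N A P = n\<^sub>P" "\<And>c. c \<notin> P \<Longrightarrow> n_votes N A {c} = n"
    "\<And>\<alpha> c. approval_weight \<alpha> N A c = (if c \<in> P then real n\<^sub>P * \<alpha> x else real n * \<alpha> 1)"
proof -
  obtain P :: "'c set" where P: "card P = x"
    using obtain_subset_with_card_n[of x "UNIV :: 'c set"] assms(2) by auto
  then have "P \<noteq> {}" "P \<noteq> UNIV" using assms(1,2) by auto
  then obtain N A where NA: "party_list N A (party_with_singletons P)"
    "n_votes N A P = n\<^sub>P" "\<And>c. c \<notin> P \<Longrightarrow> n_votes N A {c} = n"
    "\<And>\<alpha> c. approval_weight \<alpha> N A c = (if c \<in> P then real n\<^sub>P * \<alpha> (card P) else real n * \<alpha> 1)"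
    using assms(3) by (rule party_with_singletons_profile[OF _ _ disjI2]) blast+
  have "approval_weight \<alpha> N A c = (if c \<in> P then real n\<^sub>P * \<alpha> x else real n * \<alpha> 1)" for \<alpha> c
    using NA(4)[of \<alpha> c] P by simp
  then show thesis using that[OF P \<open>P \<noteq> UNIV\<close> NA(1-3)] by blast
qed

lemma party_proportionalD:
  assumes "party_proportional f" "party_list N A P" "W \<in> f N A" "Q \<in> P" "Q' \<in> P"
    "real (n_votes N A Q) / real (card Q) < real (n_votes N A Q') / real (card Q')" "Q \<subseteq> W"
  shows "Q' \<subseteq> W"
  using assms unfolding party_proportional_def by blast

lemma averse_unanimousD:
  assumes "averse_unanimous f" "party_list N A P" "Q \<in> P" "\<And>W. W \<in> f N A \<Longrightarrow> W \<subseteq> Q"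
    "Q' \<in> P" "Q' \<noteq> Q" "card Q' = 1"
  shows "real (n_votes N A Q') < real (n_votes N A Q) / real (card Q)"
  using assms unfolding averse_unanimous_def by blast

lemma party_proportional_bswav_weight_one_pos:
  fixes \<alpha> :: "nat \<Rightarrow> real"
  assumes PP: "party_proportional (bswav k \<alpha> :: nat set \<Rightarrow> (nat \<Rightarrow> 'c::finite set) \<Rightarrow> 'c set set)"
    and k: "1 \<le> k" "k < CARD('c)"
  shows "0 < \<alpha> 1"
proof (rule ccontr)
  assume "\<not> 0 < \<alpha> 1"
  obtain a :: 'c where True by simp
  have "{a} \<noteq> UNIV"
  proof
    assume "{a} = UNIV"
    then have "CARD('c) = 1" by (metis card.empty card_insert_disjoint empty_iff finite.emptyI One_nat_def)
    then show False using k by simp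
  qed
  then obtain N A where NA: "party_list N A (party_with_singletons {a})"
    "n_votes N A {a} = 1" "\<And>c. c \<notin> {a} \<Longrightarrow> n_votes N A {c} = 0"
    "\<And>\<beta> c. approval_weight \<beta> N A c = (if c \<in> {a} then real 1 * \<beta> (card {a}) else real 0 * \<beta> 1)"
    using party_with_singletons_profile[of "{a}"] by blast
  have weight: "approval_weight \<alpha> N A c \<le> 0" "c \<noteq> a \<Longrightarrow> approval_weight \<alpha> N A c = 0" for c
    using NA(4)[of \<alpha> c] \<open>\<not> 0 < \<alpha> 1\<close> by auto
  have "k \<le> card (UNIV - {a})" using k by simp
  then obtain W where W: "W \<subseteq> UNIV - {a}" "card W = k" by (meson obtain_subset_with_card_n)
  have "W \<in> bswav k \<alpha> N A"
  proof -
    have fin: "finite N" using party_list_finite_voters[OF NA(1)] .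
    have "bswav_score \<alpha> N A W = 0"
      using W(1) weight(2) by (simp add: bswav_score_eq_sum_approval_weight[OF fin] subset_eq)
    moreover have "bswav_score \<alpha> N A W' \<le> 0" for W'
      using weight(1) by (simp add: bswav_score_eq_sum_approval_weight[OF fin] sum_nonpos)
    ultimately show ?thesis using W(2) unfolding bswav_def by simp
  qed
  moreover obtain b where "b \<in> W" using W(2) k by fastforce
  moreover have "{b} \<in> party_with_singletons {a}"
    using W(1) \<open>b \<in> W\<close> by (intro party_with_singletons_mem(2)) auto
  moreover have "real (n_votes N A {b}) / real (card {b}) < real (n_votes N A {a}) / real (card {a})"
    using NA(2,3) W(1) \<open>b \<in> W\<close> by auto
  ultimately have "{a} \<subseteq> W"
    using party_proportionalD[OF PP NA(1) _ _ party_with_singletons_mem(1)] by blast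
  then show False using W(1) by auto
qed

lemma ex_pos_nat_mult_gt:
  fixes c d :: real
  assumes "0 < d"
  obtains n :: nat where "0 < n" "c < real n * d"
proof -
  obtain n :: nat where "c < real n * d" using reals_Archimedean3[OF assms] by blast
  then have "c < real (Suc n) * d" using assms by (simp add: distrib_right)
  then show thesis using that by blast
qed

text \<open>If \<open>x * \<alpha> x > \<alpha> 1\<close>, a party of size \<open>x\<close> with \<open>x n - 1\<close> voters outweighs every
  singleton party with \<open>n\<close> voters although its vote ratio is smaller.\<close>

lemma bswav_weight_le_weight_one:
  fixes \<alpha> :: "nat \<Rightarrow> real"
  assumes PP: "party_proportional (bswav k \<alpha> :: nat set \<Rightarrow> (nat \<Rightarrow> 'c::finite set) \<Rightarrow> 'c set set)"
    and AU: "averse_unanimous (bswav k \<alpha> :: nat set \<Rightarrow> (nat \<Rightarrow> 'c::finite set) \<Rightarrow> 'c set set)"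
    and k: "1 \<le> k" "k < CARD('c)" and x: "1 \<le> x" "x < CARD('c)"
  shows "real x * \<alpha> x \<le> \<alpha> 1"
proof (rule ccontr)
  assume "\<not> real x * \<alpha> x \<le> \<alpha> 1"
  then obtain n :: nat where n: "0 < n" "\<alpha> x < real n * (real x * \<alpha> x - \<alpha> 1)"
    using ex_pos_nat_mult_gt[of "real x * \<alpha> x - \<alpha> 1"] by auto
  obtain P :: "'c set" and N A where P: "card P = x" "P \<noteq> UNIV"
    and NA: "party_list N A (party_with_singletons P)"
    "n_votes N A P = x * n - 1" "\<And>c. c \<notin> P \<Longrightarrow> n_votes N A {c} = n"
    "\<And>\<beta> c. approval_weight \<beta> N A c
             = (if c \<in> P then real (x * n - 1) * \<beta> x else real n * \<beta> 1)"
    by (rule party_of_card_with_singletons_profile[OF x n(1), where n\<^sub>P = "x * n - 1"]) blast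
  have nP: "real (x * n - 1) = real x * real n - 1" using x n(1) by (simp add: of_nat_diff)
  have dominant: "approval_weight \<alpha> N A b < approval_weight \<alpha> N A a" if "a \<in> P" "b \<notin> P" for a b
    using that n(2) unfolding NA(4) nP by (simp add: algebra_simps)
  have ratio: "real (n_votes N A P) / real (card P) < real (n_votes N A {c}) / real (card {c})"
    if "c \<notin> P" for c
    using that x P(1) unfolding NA(2) NA(3)[OF that] nP by (simp add: field_simps)
  have fin: "finite N" using party_list_finite_voters[OF NA(1)] .
  note parties = party_with_singletons_mem[where P = P]
  obtain c where c: "c \<notin> P" using P(2) by blast
  show False
  proof (cases "k \<le> x")
    case True
    have "W \<subseteq> P" if "W \<in> bswav k \<alpha> N A" for W
    proof -
      have "P \<subseteq> W \<Longrightarrow> P = W"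
        using card_bswav[OF that] True P(1) by (intro card_seteq) simp_all
      then show ?thesis using bswav_dominant_subset_or_superset[OF fin that dominant] by blast
    qed
    then have "real (n_votes N A {c}) < real (n_votes N A P) / real (card P)"
      using c by (intro averse_unanimousD[OF AU NA(1) parties(1) _ parties(2)[OF c]]) auto
    then show False using ratio[OF c] by simp
  next
    case False
    obtain W where W: "W \<in> bswav k \<alpha> N A" using bswav_nonempty[of k \<alpha> N A] k by fastforce
    have "\<not> W \<subseteq> P" using card_mono[of P W] card_bswav[OF W] False P(1) by auto
    then have "P \<subseteq> W" using bswav_dominant_subset_or_superset[OF fin W dominant] by blast
    moreover have "W \<noteq> UNIV" using card_bswav[OF W] k by auto
    ultimately obtain d where d: "d \<notin> W" "d \<notin> P" by blast
    then show False
      using party_proportionalD[OF PP NA(1) W parties(1) parties(2)[OF d(2)] ratio[OF d(2)]]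
        \<open>P \<subseteq> W\<close> by blast
  qed
qed

text \<open>If \<open>x * \<alpha> x < \<alpha> 1\<close>, singleton parties with \<open>n\<close> voters each outweigh a party of
  size \<open>x\<close> with \<open>x n + 1\<close> voters although their vote ratio is smaller.\<close>

lemma bswav_weight_one_le_weight:
  fixes \<alpha> :: "nat \<Rightarrow> real"
  assumes PP: "party_proportional (bswav k \<alpha> :: nat set \<Rightarrow> (nat \<Rightarrow> 'c::finite set) \<Rightarrow> 'c set set)"
    and k: "1 \<le> k" "k < CARD('c)" and x: "1 \<le> x" "x < CARD('c)"
  shows "\<alpha> 1 \<le> real x * \<alpha> x"
proof (rule ccontr)
  assume "\<not> \<alpha> 1 \<le> real x * \<alpha> x"
  then obtain n :: nat where n: "0 < n" "\<alpha> x < real n * (\<alpha> 1 - real x * \<alpha> x)"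
    using ex_pos_nat_mult_gt[of "\<alpha> 1 - real x * \<alpha> x"] by auto
  obtain P :: "'c set" and N A where P: "card P = x" "P \<noteq> UNIV"
    and NA: "party_list N A (party_with_singletons P)"
    "n_votes N A P = x * n + 1" "\<And>c. c \<notin> P \<Longrightarrow> n_votes N A {c} = n"
    "\<And>\<beta> c. approval_weight \<beta> N A c
             = (if c \<in> P then real (x * n + 1) * \<beta> x else real n * \<beta> 1)"
    by (rule party_of_card_with_singletons_profile[OF x n(1), where n\<^sub>P = "x * n + 1"]) blast
  have dominant: "approval_weight \<alpha> N A b < approval_weight \<alpha> N A a" if "a \<in> - P" "b \<notin> - P" for a b
    using that n(2) unfolding NA(4) by (simp add: algebra_simps)
  have ratio: "real (n_votes N A {c}) / real (card {c}) < real (n_votes N A P) / real (card P)"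
    if "c \<notin> P" for c
    using that x P(1) unfolding NA(2) NA(3)[OF that] by (simp add: field_simps)
  have fin: "finite N" using party_list_finite_voters[OF NA(1)] .
  note parties = party_with_singletons_mem[where P = P]
  obtain W where W: "W \<in> bswav k \<alpha> N A" using bswav_nonempty[of k \<alpha> N A] k by fastforce
  have "W \<noteq> {}" "W \<noteq> UNIV" using card_bswav[OF W] k by auto
  have "P \<noteq> {}" using P(1) x(1) by auto
  have dichotomy: "- P \<subseteq> W \<or> W \<subseteq> - P"
    using bswav_dominant_subset_or_superset[OF fin W dominant] .
  then obtain c where c: "c \<in> W" "c \<notin> P" using \<open>W \<noteq> {}\<close> P(2) by blast
  then have "P \<subseteq> W"
    using party_proportionalD[OF PP NA(1) W parties(2)[OF c(2)] parties(1) ratio[OF c(2)]] by blast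
  then show False using dichotomy \<open>W \<noteq> UNIV\<close> \<open>P \<noteq> {}\<close> by blast
qed

lemma bswav_eq_if_score_affine:
  assumes "0 < a" "\<And>W. card W = k \<Longrightarrow> bswav_score \<alpha> N A W = a * bswav_score \<beta> N A W + b"
  shows "bswav k \<alpha> N A = bswav k \<beta> N A"
  using assms unfolding bswav_def by auto

text \<open>A voter approving all \<open>m\<close> candidates approves exactly \<open>k\<close> members of any committee,
  so only the weights \<open>\<alpha> x\<close> with \<open>x < m\<close> affect which committees win.\<close>

lemma bswav_score_eq_sav_score:
  fixes A :: "nat \<Rightarrow> 'c::finite set" and \<alpha> :: "nat \<Rightarrow> real"
  assumes "valid_profile N A" "card W = k"
    and harmonic: "\<And>x. 1 \<le> x \<Longrightarrow> x < CARD('c) \<Longrightarrow> real x * \<alpha> x = \<alpha> 1"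
  shows "bswav_score \<alpha> N A W = \<alpha> 1 * bswav_score (\<lambda>x. 1 / real x) N A W
           + (\<Sum>i\<in>N. if A i = UNIV then (\<alpha> CARD('c) - \<alpha> 1 / real CARD('c)) * real k else 0)"
  unfolding bswav_score_def sum_distrib_left sum.distrib[symmetric]
proof (rule sum.cong[OF refl])
  fix i assume "i \<in> N"
  then have "A i \<noteq> {}" using assms(1) unfolding valid_profile_def by blast
  then have pos: "1 \<le> card (A i)" by (simp add: Suc_leI card_gt_0_iff)
  show "\<alpha> (card (A i)) * real (card (A i \<inter> W))
      = \<alpha> 1 * (1 / real (card (A i)) * real (card (A i \<inter> W)))
        + (if A i = UNIV then (\<alpha> CARD('c) - \<alpha> 1 / real CARD('c)) * real k else 0)"
  proof (cases "A i = UNIV")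
    case True
    then show ?thesis using assms(2) by (simp add: algebra_simps)
  next
    case False
    then have "card (A i) < CARD('c)" by (simp add: psubset_card_mono psubsetI)
    then have "\<alpha> (card (A i)) = \<alpha> 1 / real (card (A i))"
      using harmonic[OF pos] \<open>A i \<noteq> {}\<close> by (simp add: eq_divide_eq mult.commute)
    then show ?thesis using False by simp
  qed
qed

lemma bswav_eq_sav_if_harmonic:
  fixes A :: "nat \<Rightarrow> 'c::finite set" and \<alpha> :: "nat \<Rightarrow> real"
  assumes "valid_profile N A" "0 < \<alpha> 1"
    and "\<And>x. 1 \<le> x \<Longrightarrow> x < CARD('c) \<Longrightarrow> real x * \<alpha> x = \<alpha> 1"
  shows "bswav k \<alpha> N A = sav k N A"
  unfolding sav_def using assms(2) bswav_score_eq_sav_score[OF assms(1) _ assms(3)]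
  by (rule bswav_eq_if_score_affine)

lemma approval_weight_sav_party:
  assumes "party_list N A P" "Q \<in> P" "c \<in> Q"
  shows "approval_weight (\<lambda>x. 1 / real x) N A c = real (n_votes N A Q) / real (card Q)"
  using approval_weight_party[OF assms] by simp

lemma party_proportional_sav: "party_proportional (sav k :: nat set \<Rightarrow> (nat \<Rightarrow> 'c::finite set) \<Rightarrow> 'c set set)"
  unfolding party_proportional_def
proof (intro allI impI ballI)
  fix N and A :: "nat \<Rightarrow> 'c set" and P W Q Q'
  assume P: "party_list N A P" and W: "W \<in> sav k N A" and Q: "Q \<in> P" "Q' \<in> P"
    and less: "real (n_votes N A Q) / real (card Q) < real (n_votes N A Q') / real (card Q')"
    and "Q \<subseteq> W"
  show "Q' \<subseteq> W"
  proof
    fix c assume c: "c \<in> Q'"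
    have "Q \<noteq> {}" using P Q(1) unfolding party_list_def partition_on_def by auto
    then obtain d where d: "d \<in> Q" by blast
    show "c \<in> W"
    proof (rule ccontr)
      assume "c \<notin> W"
      then have "approval_weight (\<lambda>x. 1 / real x) N A c \<le> approval_weight (\<lambda>x. 1 / real x) N A d"
        using bswav_exchange_le[OF party_list_finite_voters[OF P] W[unfolded sav_def]] d \<open>Q \<subseteq> W\<close>
        by blast
      then show False
        using approval_weight_sav_party[OF P Q(2) c] approval_weight_sav_party[OF P Q(1) d] less
        by simp
    qed
  qed
qed

lemma averse_unanimous_sav:
  assumes "1 \<le> k" "k \<le> CARD('c::finite)"
  shows "averse_unanimous (sav k :: nat set \<Rightarrow> (nat \<Rightarrow> 'c set) \<Rightarrow> 'c set set)"
  unfolding averse_unanimous_def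
proof (intro allI impI ballI)
  fix N and A :: "nat \<Rightarrow> 'c set" and P Q Q'
  assume P: "party_list N A P" and Q: "Q \<in> P" "Q' \<in> P" and unanimous: "\<forall>W\<in>sav k N A. W \<subseteq> Q"
    and "Q' \<noteq> Q \<and> card Q' = 1"
  then obtain c where c: "Q' = {c}" "c \<notin> Q"
    using P unfolding party_list_def partition_on_def by (metis card_1_singletonE disjointD disjoint_iff singletonI)
  show "real (n_votes N A Q') < real (n_votes N A Q) / real (card Q)"
  proof (rule ccontr)
    assume not_less: "\<not> ?thesis"
    obtain W where W: "W \<in> sav k N A" using bswav_nonempty[OF assms(2)] unfolding sav_def by blast
    then obtain d where d: "d \<in> W" using card_bswav[of W k] assms(1) unfolding sav_def by fastforce
    have "c \<notin> W" "W \<subseteq> Q" using unanimous W c(2) by auto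
    moreover have "approval_weight (\<lambda>x. 1 / real x) N A d \<le> approval_weight (\<lambda>x. 1 / real x) N A c"
      using approval_weight_sav_party[OF P Q(1), of d] approval_weight_sav_party[OF P Q(2), of c]
        not_less d c(1) \<open>W \<subseteq> Q\<close> by auto
    ultimately have "insert c (W - {d}) \<in> sav k N A"
      using bswav_exchange_mem[OF party_list_finite_voters[OF P] W[unfolded sav_def] _ d]
      unfolding sav_def by blast
    then show False using unanimous c(2) by blast
  qed
qed

lemma party_proportional_cong:
  assumes "\<And>N A. valid_profile N A \<Longrightarrow> f N A = g N A"
  shows "party_proportional f \<longleftrightarrow> party_proportional g"
  using assms unfolding party_proportional_def party_list_def by simp

lemma averse_unanimous_cong:
  assumes "\<And>N A. valid_profile N A \<Longrightarrow> f N A = g N A"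
  shows "averse_unanimous f \<longleftrightarrow> averse_unanimous g"
  using assms unfolding averse_unanimous_def party_list_def by simp

theorem proposition3:
  fixes k :: nat and \<alpha> :: "nat \<Rightarrow> real"
  assumes "CARD('c) \<ge> 2" and "1 \<le> k" and "k < CARD('c)"
    and "\<forall>x\<in>{1..CARD('c)}. \<alpha> x \<ge> 0"
  shows "(party_proportional (bswav k \<alpha> :: nat set \<Rightarrow> (nat \<Rightarrow> 'c::finite set) \<Rightarrow> 'c set set)
            \<and> averse_unanimous (bswav k \<alpha> :: nat set \<Rightarrow> (nat \<Rightarrow> 'c::finite set) \<Rightarrow> 'c set set))
         \<longleftrightarrow> (\<forall>N (A :: nat \<Rightarrow> 'c::finite set). valid_profile N A \<longrightarrow> bswav k \<alpha> N A = sav k N A)"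
proof -
  let ?f = "bswav k \<alpha> :: nat set \<Rightarrow> (nat \<Rightarrow> 'c set) \<Rightarrow> 'c set set"
  have "\<forall>N A. valid_profile N A \<longrightarrow> ?f N A = sav k N A"
    if PP: "party_proportional ?f" and AU: "averse_unanimous ?f"
  proof -
    have "real x * \<alpha> x = \<alpha> 1" if "1 \<le> x" "x < CARD('c)" for x
      using bswav_weight_le_weight_one[OF PP AU assms(2,3) that]
        bswav_weight_one_le_weight[OF PP assms(2,3) that] by linarith
    then show ?thesis
      using bswav_eq_sav_if_harmonic party_proportional_bswav_weight_one_pos[OF PP assms(2,3)] by blast
  qed
  moreover have "party_proportional ?f \<and> averse_unanimous ?f"
    if "\<forall>N A. valid_profile N A \<longrightarrow> ?f N A = sav k N A"
    using that party_proportional_cong averse_unanimous_cong party_proportional_sav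
      averse_unanimous_sav[OF assms(2) less_imp_le[OF assms(3)]] by metis
  ultimately show ?thesis by blast
qed

end
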